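(* Let $\Omega$ be a convex body contained in the unit ball whose volume is bounded below by a positive constant depending only on $d$, and let $f_0(x):=\|x\|^2$. There exist positive constants $c_1,c_2$ depending only on $d$ such that \[ \log N\big(c_1n^{-2/d}, \mathfrak{B}^{\mathcal{C}(\Omega)}_{\mathbb{P}_n}(f_0,t), \ell_{\mathbb{P}_n}\big)\ge\frac n8\quad\text{for all } t\ge c_2n^{-2/d}. \]
   Context: $\mathcal{S}=\delta\mathbb{Z}^d$; the points $X_1,\dots,X_n$ are an enumeration of $\mathcal{S}\cap\Omega$, $n=\#(\mathcal{S}\cap\Omega)$, with $\delta$ below a dimensional constant so that $2\le c_d\delta^{-d}\le n\le C_d\delta^{-d}$ for dimensional constants $c_d,C_d$. $\mathcal{C}(\Omega)$ is the class of convex functions on $\Omega$. $\ell_{\mathbb{P}_n}(f,g)=(\frac1n\sum_{i=1}^n(f(X_i)-g(X_i))^2)^{1/2}$ and $\mathfrak{B}^{\mathcal{F}}_{\mathbb{P}_n}(f,t)=\{g\in\mathcal{F}:\ell_{\mathbb{P}_n}(f,g)\le t\}$. $N(\varepsilon,A,\rho)$ denotes covering number. *)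

theory Defs
  imports "HOL-Analysis.Analysis" "HOL-Library.Extended_Nat" "HOL-Library.Extended_Real"
begin

definition scaled_lattice :: "real \<Rightarrow> (real^'d) set" where
  "scaled_lattice \<delta> = {x. \<forall>i. \<exists>k::int. x $ i = \<delta> * of_int k}"

text \<open>Empirical L2 pseudometric over the finite design set P (the points X_1..X_n).\<close>
definition ell_Pn :: "(real^'d) set \<Rightarrow> ((real^'d) \<Rightarrow> real) \<Rightarrow> ((real^'d) \<Rightarrow> real) \<Rightarrow> real" where
  "ell_Pn P f g = sqrt ((1 / real (card P)) * (\<Sum>x\<in>P. (f x - g x)^2))"

text \<open>Convex functions on \<Omega> (values outside \<Omega> are irrelevant).\<close>
definition convex_class :: "(real^'d) set \<Rightarrow> ((real^'d) \<Rightarrow> real) set" where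
  "convex_class \<Omega> = {f. convex_on \<Omega> f}"

definition emp_ball :: "('a \<Rightarrow> 'a \<Rightarrow> real) \<Rightarrow> 'a set \<Rightarrow> 'a \<Rightarrow> real \<Rightarrow> 'a set" where
  "emp_ball \<rho> F f t = {g \<in> F. \<rho> f g \<le> t}"

text \<open>Covering number: least number of \<rho>-balls of radius \<epsilon> (arbitrary centres) covering A;
  \<infinity> if no finite cover exists.\<close>
definition covering_number :: "real \<Rightarrow> 'a set \<Rightarrow> ('a \<Rightarrow> 'a \<Rightarrow> real) \<Rightarrow> enat" where
  "covering_number \<epsilon> A \<rho> =
     Inf {enat (card C) | C. finite C \<and> A \<subseteq> (\<Union>c\<in>C. {g. \<rho> c g \<le> \<epsilon>})}"

definition log_covering_number :: "real \<Rightarrow> 'a set \<Rightarrow> ('a \<Rightarrow> 'a \<Rightarrow> real) \<Rightarrow> ereal" where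
  "log_covering_number \<epsilon> A \<rho> =
     (case covering_number \<epsilon> A \<rho> of enat k \<Rightarrow> ereal (ln (real k)) | \<infinity> \<Rightarrow> \<infinity>)"

end

theory Submission
  imports Defs
begin

(* Lattice points fill the convex body: the points of Omega whose delta-cube leaves Omega form
   finitely many exit sets {x in Omega. x + w notin Omega}, each of volume O(|w|) because its
   translates by multiples of w are pairwise disjoint; every other point lies in one of the n
   lattice cubes inside Omega. Hence n delta^d >= vol(Omega)/2, i.e. delta^2 >= c n^(-2/d).

   For S a subset of the lattice points P, the maximum of the tangent planes of ||x||^2 at the
   points of P, lowered by h <= delta^2 at the points of S, is convex and equals
   ||x||^2 - h 1_S on P. These 2^n functions lie within distance h of f0 and are pairwise
   h sqrt(|S Delta T| / n) apart, so a ball of radius h/8 contains at most as many of them as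
   there are sets of size <= n/16, which is at most (5/4)^n 4^(n/16) <= 2^n e^(-n/8). *)

section \<open>Exit sets of convex bodies\<close>

definition exit_set :: "'a::real_vector set \<Rightarrow> 'a \<Rightarrow> 'a set" where
  "exit_set \<Omega> w = {x \<in> \<Omega>. x + w \<notin> \<Omega>}"

lemma exit_set_eq_Diff_translation: "exit_set \<Omega> w = \<Omega> - (+) (- w) ` \<Omega>"
  unfolding exit_set_def by (auto simp: image_iff) (metis diff_add_cancel diff_conv_add_uminus)

lemma lmeasurable_exit_set:
  fixes \<Omega> :: "'a::euclidean_space set"
  assumes "\<Omega> \<in> lmeasurable"
  shows "exit_set \<Omega> w \<in> lmeasurable"
  unfolding exit_set_eq_Diff_translation
  using assms by (intro fmeasurable_Diff fmeasurableD measurable_translation)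

lemma exit_set_translates_disjoint:
  assumes "convex \<Omega>" and "i < j"
  shows "(+) (real i *\<^sub>R w) ` exit_set \<Omega> w \<inter> (+) (real j *\<^sub>R w) ` exit_set \<Omega> w = {}"
proof (rule ccontr)
  assume "\<not> ?thesis"
  then obtain a b where a: "a \<in> exit_set \<Omega> w" and b: "b \<in> exit_set \<Omega> w"
    and eq: "real i *\<^sub>R w + a = real j *\<^sub>R w + b"
    by auto
  define k where "k = real j - real i"
  have "k \<ge> 1" using \<open>i < j\<close> by (simp add: k_def)
  have "a = b + k *\<^sub>R w" using eq by (simp add: k_def algebra_simps)
  \<comment> \<open>\<open>b + w\<close> lies on the segment from \<open>b\<close> to \<open>a = b + k w\<close>, both of which are in \<open>\<Omega>\<close>.\<close>
  then have "b + w = (1 - 1/k) *\<^sub>R b + (1/k) *\<^sub>R a"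
    using \<open>k \<ge> 1\<close> by (simp add: algebra_simps)
  also have "\<dots> \<in> \<Omega>"
    using a b \<open>k \<ge> 1\<close> unfolding exit_set_def by (intro convexD[OF \<open>convex \<Omega>\<close>]) auto
  finally show False using b by (simp add: exit_set_def)
qed

lemma mult_measure_exit_set_le:
  fixes \<Omega> :: "'a::euclidean_space set"
  assumes "convex \<Omega>" and "\<Omega> \<subseteq> cball 0 1" and "real m * norm w \<le> 1"
  shows "real m * measure lebesgue (exit_set \<Omega> w) \<le> measure lebesgue (cball (0::'a) 2)"
proof -
  define T where "T k = (+) (real k *\<^sub>R w) ` exit_set \<Omega> w" for k :: nat
  have "\<Omega> \<in> lmeasurable"
    using assms by (intro measurable_convex) (auto intro: bounded_subset)
  then have T_lmeasurable: "T k \<in> lmeasurable" for k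
    unfolding T_def by (intro measurable_translation lmeasurable_exit_set)
  have "disjoint_family_on T {..<m}"
    unfolding disjoint_family_on_def T_def
    by (metis exit_set_translates_disjoint[OF \<open>convex \<Omega>\<close>] inf_commute linorder_neqE_nat)
  then have "measure lebesgue (\<Union>k<m. T k) = (\<Sum>k<m. measure lebesgue (T k))"
    using T_lmeasurable by (intro measure_finite_Union) (auto simp: fmeasurableD emeasure_eq_measure2)
  also have "\<dots> = real m * measure lebesgue (exit_set \<Omega> w)"
    by (simp add: T_def measure_translation)
  finally have "real m * measure lebesgue (exit_set \<Omega> w) = measure lebesgue (\<Union>k<m. T k)" ..
  also have "\<dots> \<le> measure lebesgue (cball (0::'a) 2)"
  proof (intro measure_mono_fmeasurable subsetI)
    fix z assume "z \<in> (\<Union>k<m. T k)"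
    then obtain k a where "k < m" "a \<in> exit_set \<Omega> w" "z = real k *\<^sub>R w + a"
      unfolding T_def by auto
    moreover have "real k * norm w \<le> 1"
    proof -
      have "real k * norm w \<le> real m * norm w"
        using \<open>k < m\<close> by (intro mult_right_mono) auto
      with assms(3) show ?thesis by linarith
    qed
    ultimately show "z \<in> cball 0 2"
      using assms(2) norm_triangle_ineq[of "real k *\<^sub>R w" a] by (auto simp: exit_set_def)
  qed (use T_lmeasurable in auto)
  finally show ?thesis .
qed

lemma measure_exit_set_le:
  fixes \<Omega> :: "'a::euclidean_space set"
  assumes "convex \<Omega>" and "\<Omega> \<subseteq> cball 0 1" and "norm w \<le> 1"
  shows "measure lebesgue (exit_set \<Omega> w) \<le> 2 * norm w * measure lebesgue (cball (0::'a) 2)"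
proof (cases "w = 0")
  case True
  then show ?thesis by (simp add: exit_set_def)
next
  case False
  define y where "y = 1 / norm w"
  define m where "m = nat \<lfloor>y\<rfloor>"
  have "1 \<le> y" "y * norm w = 1" using False assms(3) by (auto simp: y_def)
  moreover have "real m \<le> y" "y \<le> 2 * real m"
  proof -
    have "1 \<le> \<lfloor>y\<rfloor>" using \<open>1 \<le> y\<close> by (simp add: le_floor_iff)
    then show "real m \<le> y" "y \<le> 2 * real m"
      unfolding m_def by linarith+
  qed
  ultimately have m: "real m * norm w \<le> 1" "1 \<le> 2 * real m * norm w"
    by (metis mult_right_mono norm_ge_zero)+
  have "measure lebesgue (exit_set \<Omega> w) \<le> 2 * norm w * (real m * measure lebesgue (exit_set \<Omega> w))"
    using m(2) mult_right_mono[OF m(2) measure_nonneg] by (simp add: mult_ac)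
  also have "\<dots> \<le> 2 * norm w * measure lebesgue (cball (0::'a) 2)"
    by (intro mult_left_mono mult_measure_exit_set_le assms m(1)) auto
  finally show ?thesis .
qed

section \<open>Cubes inside a convex body\<close>

lemma cube_subset_convex:
  fixes \<Omega> :: "'a::euclidean_space set" and \<delta> :: real
  assumes "convex \<Omega>" and "0 \<le> \<delta>" and vertices: "\<And>S. S \<subseteq> Basis \<Longrightarrow> x + \<delta> *\<^sub>R \<Sum>S \<in> \<Omega>"
  shows "cbox x (x + \<delta> *\<^sub>R One) \<subseteq> \<Omega>"
proof -
  define V :: "'a set" where "V = {v. \<forall>i\<in>Basis. v \<bullet> i = 0 \<or> v \<bullet> i = 1}"
  have "cbox x (x + \<delta> *\<^sub>R One) = (\<lambda>v. x + \<delta> *\<^sub>R v) ` cbox 0 One"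
    using image_affinity_cbox[of \<delta> x 0 One] \<open>0 \<le> \<delta>\<close> by (simp add: add.commute)
  also have "\<dots> = convex hull ((\<lambda>v. x + \<delta> *\<^sub>R v) ` V)"
    by (simp add: V_def unit_interval_convex_hull convex_hull_affinity)
  also have "\<dots> \<subseteq> \<Omega>"
  proof (intro hull_minimal \<open>convex \<Omega>\<close> image_subsetI)
    fix v assume "v \<in> V"
    then have "v = \<Sum>{i\<in>Basis. v \<bullet> i = 1}"
      by (subst euclidean_eq_iff) (auto simp: V_def inner_sum_left inner_Basis sum.If_cases)
    then show "x + \<delta> *\<^sub>R v \<in> \<Omega>" by (metis (no_types, lifting) mem_Collect_eq subsetI vertices)
  qed
  finally show ?thesis .
qed

definition cube_core :: "real \<Rightarrow> 'a::euclidean_space set \<Rightarrow> 'a set" where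
  "cube_core \<delta> \<Omega> = {x \<in> \<Omega>. \<forall>S \<subseteq> Basis. x + \<delta> *\<^sub>R \<Sum>S \<in> \<Omega>}"

lemma cube_core_eq_Diff_exit_sets:
  "cube_core \<delta> \<Omega> = \<Omega> - (\<Union>S\<in>Pow Basis. exit_set \<Omega> (\<delta> *\<^sub>R \<Sum>S))"
  by (auto simp: cube_core_def exit_set_def)

lemma lmeasurable_cube_core:
  fixes \<Omega> :: "'a::euclidean_space set"
  assumes "\<Omega> \<in> lmeasurable"
  shows "cube_core \<delta> \<Omega> \<in> lmeasurable"
  unfolding cube_core_eq_Diff_exit_sets
  using assms by (intro fmeasurable_Diff fmeasurableD fmeasurable.finite_UN lmeasurable_exit_set) auto

lemma norm_sum_Basis_subset_le:
  assumes "S \<subseteq> Basis"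
  shows "norm (\<Sum>S :: 'a::euclidean_space) \<le> DIM('a)"
proof -
  have "norm (\<Sum>S :: 'a) \<le> (\<Sum>i\<in>S. norm i)" by (rule norm_sum)
  also have "\<dots> = card S" using assms by (simp add: subset_iff)
  also have "\<dots> \<le> DIM('a)" using assms by (simp add: card_mono)
  finally show ?thesis .
qed

lemma measure_le_cube_core:
  fixes \<Omega> :: "'a::euclidean_space set" and \<delta> :: real
  assumes "convex \<Omega>" and "\<Omega> \<subseteq> cball 0 1" and "0 \<le> \<delta>" and "real DIM('a) * \<delta> \<le> 1"
  shows "measure lebesgue \<Omega> \<le> measure lebesgue (cube_core \<delta> \<Omega>)
           + 2 ^ DIM('a) * (2 * real DIM('a) * \<delta> * measure lebesgue (cball (0::'a) 2))"
proof -
  define E where "E = (\<Union>S\<in>Pow Basis. exit_set \<Omega> (\<delta> *\<^sub>R \<Sum>S))"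
  have "\<Omega> \<in> lmeasurable"
    using assms by (intro measurable_convex) (auto intro: bounded_subset)
  then have exit_lmeasurable: "exit_set \<Omega> (\<delta> *\<^sub>R \<Sum>S) \<in> lmeasurable" for S
    by (rule lmeasurable_exit_set)
  have exit_le: "measure lebesgue (exit_set \<Omega> (\<delta> *\<^sub>R \<Sum>S))
      \<le> 2 * real DIM('a) * \<delta> * measure lebesgue (cball (0::'a) 2)" if "S \<subseteq> Basis" for S
  proof -
    have w: "norm (\<delta> *\<^sub>R \<Sum>S :: 'a) \<le> real DIM('a) * \<delta>"
      using norm_sum_Basis_subset_le[OF that] \<open>0 \<le> \<delta>\<close> by (simp add: mult_left_mono mult.commute)
    have "measure lebesgue (exit_set \<Omega> (\<delta> *\<^sub>R \<Sum>S))
        \<le> 2 * norm (\<delta> *\<^sub>R \<Sum>S :: 'a) * measure lebesgue (cball (0::'a) 2)"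
      using w assms(4) by (intro measure_exit_set_le assms(1,2)) linarith
    also have "\<dots> \<le> 2 * real DIM('a) * \<delta> * measure lebesgue (cball (0::'a) 2)"
      using w by (intro mult_right_mono) auto
    finally show ?thesis .
  qed
  have "measure lebesgue E \<le> (\<Sum>S\<in>Pow Basis. measure lebesgue (exit_set \<Omega> (\<delta> *\<^sub>R \<Sum>S)))"
    unfolding E_def by (intro measure_UNION_le) (auto intro: fmeasurableD[OF exit_lmeasurable])
  also have "\<dots> \<le> 2 ^ DIM('a) * (2 * real DIM('a) * \<delta> * measure lebesgue (cball (0::'a) 2))"
    using sum_mono[of "Pow Basis", OF exit_le] by (simp add: card_Pow)
  finally have "measure lebesgue E \<le> \<dots>" .
  moreover have "measure lebesgue \<Omega> \<le> measure lebesgue (cube_core \<delta> \<Omega>) + measure lebesgue E"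
    unfolding cube_core_eq_Diff_exit_sets E_def[symmetric]
    using measure_diff_le_measure_setdiff[OF \<open>\<Omega> \<in> lmeasurable\<close>, of E] exit_lmeasurable
    by (simp add: E_def fmeasurable.finite_UN)
  ultimately show ?thesis by linarith
qed

section \<open>Points of the scaled lattice in a convex body\<close>

lemma scaled_lattice_dist_ge:
  assumes "p \<in> scaled_lattice \<delta>" and "q \<in> scaled_lattice \<delta>" and "p \<noteq> q" and "0 < \<delta>"
  shows "\<delta> \<le> dist p q"
proof -
  obtain i where "p $ i \<noteq> q $ i" using \<open>p \<noteq> q\<close> by (auto simp: vec_eq_iff)
  moreover obtain k :: int where "p $ i = \<delta> * k"
    using assms(1) unfolding scaled_lattice_def by blast
  moreover obtain l :: int where "q $ i = \<delta> * l"
    using assms(2) unfolding scaled_lattice_def by blast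
  ultimately have "k \<noteq> l" and dist_i: "\<bar>p $ i - q $ i\<bar> = \<delta> * \<bar>of_int (k - l)\<bar>"
    using \<open>0 < \<delta>\<close> by (auto simp: abs_mult right_diff_distrib[symmetric])
  then have "1 \<le> \<bar>real_of_int (k - l)\<bar>"
    by (metis of_int_1_le_iff of_int_abs zabs_less_one_iff linorder_not_le right_minus_eq)
  then have "\<delta> * 1 \<le> \<bar>p $ i - q $ i\<bar>"
    unfolding dist_i using \<open>0 < \<delta>\<close> by (intro mult_left_mono) auto
  then show ?thesis
    using dist_vec_nth_le[of p i q] by (simp add: dist_real_def)
qed

lemma finite_scaled_lattice_Int:
  assumes "0 < \<delta>" and "bounded S"
  shows "finite (scaled_lattice \<delta> \<inter> (S :: (real^'d) set))"
proof -
  have "uniform_discrete (scaled_lattice \<delta> \<inter> S)"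
    unfolding uniform_discrete_def using scaled_lattice_dist_ge \<open>0 < \<delta>\<close>
    by (intro exI[of _ \<delta>]) (auto simp: not_less[symmetric])
  then show ?thesis
    using uniform_discrete_finite_iff bounded_Int \<open>bounded S\<close> by blast
qed

lemma scaled_lattice_round_up:
  fixes x :: "real^'d"
  assumes "0 < \<delta>"
  obtains p where "p \<in> scaled_lattice \<delta>" and "p \<in> cbox x (x + \<delta> *\<^sub>R 1)" and "x \<in> cbox (p - \<delta> *\<^sub>R 1) p"
proof
  define p :: "real^'d" where "p = (\<chi> i. \<delta> * of_int \<lceil>x $ i / \<delta>\<rceil>)"
  show "p \<in> scaled_lattice \<delta>" by (auto simp: scaled_lattice_def p_def)
  have "x $ i \<le> p $ i \<and> p $ i \<le> x $ i + \<delta>" for i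
  proof -
    have "x $ i / \<delta> \<le> of_int \<lceil>x $ i / \<delta>\<rceil>" and "of_int \<lceil>x $ i / \<delta>\<rceil> \<le> x $ i / \<delta> + 1"
      by linarith+
    then have "\<delta> * (x $ i / \<delta>) \<le> \<delta> * of_int \<lceil>x $ i / \<delta>\<rceil>"
      and "\<delta> * of_int \<lceil>x $ i / \<delta>\<rceil> \<le> \<delta> * (x $ i / \<delta> + 1)"
      using \<open>0 < \<delta>\<close> by (intro mult_left_mono; simp)+
    then show ?thesis
      using \<open>0 < \<delta>\<close> by (simp add: p_def algebra_simps)
  qed
  then show "p \<in> cbox x (x + \<delta> *\<^sub>R 1)" and "x \<in> cbox (p - \<delta> *\<^sub>R 1) p"
    by (auto simp: mem_box_cart diff_le_eq)
qed

lemma measure_cube_core_le_card_scaled_lattice: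
  fixes \<Omega> :: "(real^'d) set" and \<delta> :: real
  assumes "convex \<Omega>" and "bounded \<Omega>" and "0 < \<delta>"
  shows "measure lebesgue (cube_core \<delta> \<Omega>) \<le> real (card (scaled_lattice \<delta> \<inter> \<Omega>)) * \<delta> ^ CARD('d)"
proof -
  define P where "P = scaled_lattice \<delta> \<inter> \<Omega>"
  have "finite P"
    unfolding P_def using assms by (intro finite_scaled_lattice_Int)
  have cover: "cube_core \<delta> \<Omega> \<subseteq> (\<Union>p\<in>P. cbox (p - \<delta> *\<^sub>R 1) p)"
  proof
    fix x assume x: "x \<in> cube_core \<delta> \<Omega>"
    obtain p where p: "p \<in> scaled_lattice \<delta>" "p \<in> cbox x (x + \<delta> *\<^sub>R 1)" "x \<in> cbox (p - \<delta> *\<^sub>R 1) p"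
      using scaled_lattice_round_up \<open>0 < \<delta>\<close> by blast
    have "cbox x (x + \<delta> *\<^sub>R One) \<subseteq> \<Omega>"
      using x \<open>0 < \<delta>\<close> by (intro cube_subset_convex \<open>convex \<Omega>\<close>) (auto simp: cube_core_def)
    then show "x \<in> (\<Union>p\<in>P. cbox (p - \<delta> *\<^sub>R 1) p)"
      using p by (auto simp: P_def Cart_1)
  qed
  have "measure lebesgue (cube_core \<delta> \<Omega>) \<le> measure lebesgue (\<Union>p\<in>P. cbox (p - \<delta> *\<^sub>R 1) p)"
  proof (intro measure_mono_fmeasurable cover)
    show "cube_core \<delta> \<Omega> \<in> sets lebesgue"
      using assms by (intro fmeasurableD lmeasurable_cube_core measurable_convex)
  qed (use \<open>finite P\<close> in auto)
  also have "\<dots> \<le> (\<Sum>p\<in>P. measure lebesgue (cbox (p - \<delta> *\<^sub>R 1) p))"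
    using \<open>finite P\<close> by (intro measure_UNION_le) auto
  also have "\<dots> = real (card P) * \<delta> ^ CARD('d)"
  proof -
    have "cbox (p - \<delta> *\<^sub>R 1) p \<noteq> {}" for p :: "real^'d"
      using \<open>0 < \<delta>\<close> by (simp add: interval_ne_empty_cart)
    then show ?thesis by (simp add: content_cbox_cart)
  qed
  finally show ?thesis unfolding P_def .
qed

lemma card_scaled_lattice_ge:
  fixes \<Omega> :: "(real^'d) set" and \<delta> :: real
  assumes "convex \<Omega>" and "\<Omega> \<subseteq> cball 0 1" and "0 < \<delta>" and "real CARD('d) * \<delta> \<le> 1"
  shows "measure lebesgue \<Omega> - 2 ^ CARD('d) * (2 * real CARD('d) * \<delta> * measure lebesgue (cball (0::real^'d) 2))
           \<le> real (card (scaled_lattice \<delta> \<inter> \<Omega>)) * \<delta> ^ CARD('d)"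
  using measure_le_cube_core[of \<Omega> \<delta>] measure_cube_core_le_card_scaled_lattice[of \<Omega> \<delta>] assms
  by (force intro: bounded_subset)

lemma scaled_lattice_fills_convex_body:
  fixes \<kappa> :: real
  assumes "0 < \<kappa>"
  obtains \<delta>0 where "0 < \<delta>0" and "\<And>(\<Omega> :: (real^'d) set) (\<delta> :: real). convex \<Omega> \<Longrightarrow> \<Omega> \<subseteq> cball 0 1 \<Longrightarrow>
      \<kappa> \<le> measure lebesgue \<Omega> \<Longrightarrow> 0 < \<delta> \<Longrightarrow> \<delta> \<le> \<delta>0 \<Longrightarrow>
      \<kappa> / 2 \<le> real (card (scaled_lattice \<delta> \<inter> \<Omega>)) * \<delta> ^ CARD('d)"
proof
  \<comment> \<open>\<open>\<delta>0\<close> keeps the volume lost to exit sets, \<open>2^d (2 d \<delta> V)\<close>, below \<open>\<kappa>/2\<close>;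
    \<open>V + 1\<close> rather than \<open>V\<close> only avoids dividing by zero.\<close>
  define D where "D = real CARD('d)"
  define V where "V = measure lebesgue (cball (0::real^'d) 2)"
  define \<delta>0 where "\<delta>0 = min (1 / D) (\<kappa> / (4 * 2 ^ CARD('d) * D * (V + 1)))"
  have "0 < D" "0 \<le> V" by (simp_all add: D_def V_def)
  then show "0 < \<delta>0" using \<open>0 < \<kappa>\<close> by (simp add: \<delta>0_def)
  fix \<Omega> :: "(real^'d) set" and \<delta> :: real
  assume \<Omega>: "convex \<Omega>" "\<Omega> \<subseteq> cball 0 1" "\<kappa> \<le> measure lebesgue \<Omega>" and "0 < \<delta>" "\<delta> \<le> \<delta>0"
  have "real CARD('d) * \<delta> \<le> 1"
    using \<open>\<delta> \<le> \<delta>0\<close> \<open>0 < D\<close> by (simp add: \<delta>0_def D_def field_simps)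
  have "\<delta> \<le> \<kappa> / (4 * 2 ^ CARD('d) * D * (V + 1))"
    using \<open>\<delta> \<le> \<delta>0\<close> by (simp add: \<delta>0_def)
  then have "\<delta> * (4 * 2 ^ CARD('d) * D * (V + 1)) \<le> \<kappa>"
    using \<open>0 < D\<close> \<open>0 \<le> V\<close> by (simp add: pos_le_divide_eq)
  moreover have "2 ^ CARD('d) * (2 * D * \<delta> * V) \<le> \<delta> * (4 * 2 ^ CARD('d) * D * (V + 1)) / 2"
    using \<open>0 < \<delta>\<close> \<open>0 < D\<close> by (simp add: field_simps)
  moreover have "measure lebesgue \<Omega> - 2 ^ CARD('d) * (2 * D * \<delta> * V)
      \<le> real (card (scaled_lattice \<delta> \<inter> \<Omega>)) * \<delta> ^ CARD('d)"
    unfolding D_def V_def by (rule card_scaled_lattice_ge) fact+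
  ultimately show "\<kappa> / 2 \<le> real (card (scaled_lattice \<delta> \<inter> \<Omega>)) * \<delta> ^ CARD('d)"
    using \<Omega>(3) by linarith
qed

lemma powr_mult_powr_le_of_le_mult_power:
  fixes a n \<delta> :: real
  assumes "0 < a" and "0 < \<delta>" and "0 < d" and "a \<le> n * \<delta> ^ d"
  shows "a powr (2 / d) * n powr (- 2 / d) \<le> \<delta>^2"
proof -
  have "0 < n * \<delta> ^ d" using assms by linarith
  then have "0 < n" using \<open>0 < \<delta>\<close> by (simp add: zero_less_mult_iff)
  have "a powr (2 / d) * n powr (- 2 / d) = (a / n) powr (2 / d)"
    using \<open>0 < a\<close> \<open>0 < n\<close> by (simp add: powr_divide powr_minus_divide)
  also have "\<dots> \<le> (\<delta> ^ d) powr (2 / d)"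
    using assms \<open>0 < n\<close> by (intro powr_mono2) (simp_all add: pos_divide_le_eq mult.commute)
  also have "(\<delta> ^ d) powr (2 / d) = \<delta> powr (d * (2 / d))"
    using \<open>0 < \<delta>\<close> by (subst powr_realpow[symmetric]) (simp_all add: powr_powr)
  also have "\<dots> = \<delta>^2"
    using \<open>0 < d\<close> \<open>0 < \<delta>\<close> by simp
  finally show ?thesis .
qed

section \<open>Covering numbers of Hamming cubes\<close>

lemma sum_Pow_power_card:
  fixes x :: "'a::comm_semiring_1"
  assumes "finite P"
  shows "(\<Sum>D\<in>Pow P. x ^ card D) = (1 + x) ^ card P"
  using prod_add[OF assms, of "\<lambda>_. x" "\<lambda>_. 1"] by (simp add: add.commute)

lemma card_small_subsets_mult_powr_le:
  fixes x a :: real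
  assumes "finite P" and "0 < x" and "x \<le> 1"
  shows "real (card {D\<in>Pow P. real (card D) \<le> a}) * x powr a \<le> (1 + x) ^ card P"
proof -
  have "real (card {D\<in>Pow P. real (card D) \<le> a}) * x powr a
      = (\<Sum>D\<in>{D\<in>Pow P. real (card D) \<le> a}. x powr a)"
    by simp
  also have "\<dots> \<le> (\<Sum>D\<in>{D\<in>Pow P. real (card D) \<le> a}. x ^ card D)"
    using assms by (intro sum_mono) (auto simp: powr_realpow[symmetric] intro: powr_mono')
  also have "\<dots> \<le> (\<Sum>D\<in>Pow P. x ^ card D)"
    using assms by (intro sum_mono2) auto
  also have "\<dots> = (1 + x) ^ card P"
    by (rule sum_Pow_power_card[OF \<open>finite P\<close>])
  finally show ?thesis .
qed

lemma exp_mult_powr_le_powr_mult_powr: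
  fixes n :: real
  assumes "0 \<le> n"
  shows "exp (n / 8) * (5/4) powr n \<le> 2 powr n * (1/4) powr (n / 16)"
proof -
  have "ln (5/4::real) \<le> 1/4" using ln_le_minus_one[of "5/4"] by simp
  moreover have "ln (1/4::real) = - 2 * ln 2"
    using ln_realpow[of 2 2] by (simp add: ln_div)
  moreover have "2/3 \<le> ln (2::real)" by (rule ln2_ge_two_thirds)
  ultimately have "1/8 + ln (5/4) \<le> ln 2 + ln (1/4::real) / 16" by linarith
  then have "n * (1/8 + ln (5/4)) \<le> n * (ln 2 + ln (1/4::real) / 16)"
    using assms by (rule mult_left_mono)
  then show ?thesis
    by (simp add: powr_def exp_add[symmetric] algebra_simps)
qed

lemma log_covering_number_geI:
  assumes "\<And>C. finite C \<Longrightarrow> A \<subseteq> (\<Union>c\<in>C. {g. \<rho> c g \<le> \<epsilon>}) \<Longrightarrow> exp b \<le> real (card C)"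
  shows "ereal b \<le> log_covering_number \<epsilon> A \<rho>"
proof (cases "covering_number \<epsilon> A \<rho>")
  case (enat k)
  define Covers where "Covers = {enat (card C) | C. finite C \<and> A \<subseteq> (\<Union>c\<in>C. {g. \<rho> c g \<le> \<epsilon>})}"
  have "Inf Covers = enat k"
    using enat by (simp add: covering_number_def Covers_def)
  then have "enat k \<in> Covers"
    by (metis Inf_enat_def LeastI enat.distinct(2) ex_in_conv)
  then obtain C where "finite C" "A \<subseteq> (\<Union>c\<in>C. {g. \<rho> c g \<le> \<epsilon>})" "card C = k"
    by (auto simp: Covers_def)
  then have "exp b \<le> real k" using assms by blast
  moreover from this have "0 < real k" by (metis exp_gt_zero less_le_trans)
  ultimately show ?thesis
    using enat by (simp add: log_covering_number_def ln_ge_iff)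
next
  case infinity
  then show ?thesis by (simp add: log_covering_number_def)
qed

lemma card_hamming_ball_le:
  fixes \<rho> :: "'a \<Rightarrow> 'a \<Rightarrow> real" and g :: "'b set \<Rightarrow> 'a"
  assumes "finite P" and "0 < h" and "\<epsilon> \<le> h / 8"
    and commute: "\<And>x y. \<rho> x y = \<rho> y x" and triangle: "\<And>x y z. \<rho> x z \<le> \<rho> x y + \<rho> y z"
    and hamming: "\<And>S T. S \<subseteq> P \<Longrightarrow> T \<subseteq> P \<Longrightarrow> \<rho> (g S) (g T) = h * sqrt (card (sym_diff S T) / card P)"
  shows "card {S\<in>Pow P. \<rho> c (g S) \<le> \<epsilon>} \<le> card {D\<in>Pow P. real (card D) \<le> card P / 16}"
proof (cases "{S\<in>Pow P. \<rho> c (g S) \<le> \<epsilon>} = {}")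
  case True
  then show ?thesis by (simp only: card.empty le0)
next
  case False
  then obtain S0 where S0: "S0 \<subseteq> P" "\<rho> c (g S0) \<le> \<epsilon>" by auto
  show ?thesis
  proof (rule card_inj_on_le)
    show "inj_on (sym_diff S0) {S\<in>Pow P. \<rho> c (g S) \<le> \<epsilon>}"
      by (rule inj_onI) blast
    show "finite {D\<in>Pow P. real (card D) \<le> card P / 16}"
      using \<open>finite P\<close> by simp
    show "sym_diff S0 ` {S\<in>Pow P. \<rho> c (g S) \<le> \<epsilon>} \<subseteq> {D\<in>Pow P. real (card D) \<le> card P / 16}"
    proof (rule image_subsetI)
      fix S assume "S \<in> {S\<in>Pow P. \<rho> c (g S) \<le> \<epsilon>}"
      then have S: "S \<subseteq> P" "\<rho> c (g S) \<le> \<epsilon>" by auto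
      have "h * sqrt (card (sym_diff S0 S) / card P) = \<rho> (g S0) (g S)"
        using S S0 by (simp add: hamming)
      also have "\<dots> \<le> \<rho> c (g S0) + \<rho> c (g S)"
        using triangle[where x="g S0" and y=c and z="g S"] commute[of "g S0" c] by simp
      also have "\<dots> \<le> h * sqrt (1/16)"
        using S S0 \<open>\<epsilon> \<le> h / 8\<close> by (simp add: real_sqrt_divide)
      finally have "card (sym_diff S0 S) / card P \<le> 1/16"
        using \<open>0 < h\<close> by simp
      moreover have "card (sym_diff S0 S) \<le> card P"
        using S S0 \<open>finite P\<close> by (intro card_mono) auto
      ultimately have "real (card (sym_diff S0 S)) \<le> card P / 16"
        by (cases "card P = 0") (auto simp: field_simps)
      then show "sym_diff S0 S \<in> {D\<in>Pow P. real (card D) \<le> card P / 16}"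
        using S S0 by auto
    qed
  qed
qed

lemma log_covering_number_ge_hamming:
  fixes \<rho> :: "'a \<Rightarrow> 'a \<Rightarrow> real" and g :: "'b set \<Rightarrow> 'a"
  assumes "finite P" and "0 < h" and "\<epsilon> \<le> h / 8"
    and commute: "\<And>x y. \<rho> x y = \<rho> y x" and triangle: "\<And>x y z. \<rho> x z \<le> \<rho> x y + \<rho> y z"
    and hamming: "\<And>S T. S \<subseteq> P \<Longrightarrow> T \<subseteq> P \<Longrightarrow> \<rho> (g S) (g T) = h * sqrt (card (sym_diff S T) / card P)"
    and "g ` Pow P \<subseteq> A"
  shows "ereal (card P / 8) \<le> log_covering_number \<epsilon> A \<rho>"
proof (rule log_covering_number_geI)
  fix C assume "finite C" and cover: "A \<subseteq> (\<Union>c\<in>C. {f. \<rho> c f \<le> \<epsilon>})"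
  define n where "n = real (card P)"
  define Small where "Small = {D\<in>Pow P. real (card D) \<le> n / 16}"
  have "Pow P \<subseteq> (\<Union>c\<in>C. {S\<in>Pow P. \<rho> c (g S) \<le> \<epsilon>})"
    using cover \<open>g ` Pow P \<subseteq> A\<close> by blast
  then have "card (Pow P) \<le> card (\<Union>c\<in>C. {S\<in>Pow P. \<rho> c (g S) \<le> \<epsilon>})"
    using \<open>finite C\<close> \<open>finite P\<close> by (intro card_mono) auto
  also have "\<dots> \<le> (\<Sum>c\<in>C. card {S\<in>Pow P. \<rho> c (g S) \<le> \<epsilon>})"
    using \<open>finite C\<close> by (rule card_UN_le)
  also have "\<dots> \<le> (\<Sum>c\<in>C. card Small)"
    unfolding Small_def n_def
    by (intro sum_mono card_hamming_ball_le[where \<rho>=\<rho> and g=g and h=h, OF assms(1-6)])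
  also have "\<dots> = card C * card Small"
    by simp
  finally have "2 powr n \<le> card C * card Small"
    using \<open>finite P\<close> by (simp add: n_def card_Pow powr_realpow flip: of_nat_mult)
  have "exp (n / 8) * (5/4) powr n \<le> 2 powr n * (1/4) powr (n / 16)"
    by (rule exp_mult_powr_le_powr_mult_powr) (simp add: n_def)
  also have "\<dots> \<le> card C * (card Small * (1/4) powr (n / 16))"
    using \<open>2 powr n \<le> card C * card Small\<close> by (simp add: mult_right_mono)
  also have "\<dots> \<le> card C * (5/4) powr n"
    using card_small_subsets_mult_powr_le[OF \<open>finite P\<close>, of "1/4" "n / 16"]
    by (intro mult_left_mono) (simp_all add: Small_def n_def powr_realpow)
  finally show "exp (card P / 8) \<le> real (card C)"
    by (simp add: n_def)
qed

section \<open>The empirical distance\<close>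

lemma ell_Pn_commute: "ell_Pn P f g = ell_Pn P g f"
  unfolding ell_Pn_def by (simp add: power2_commute)

lemma ell_Pn_triangle: "ell_Pn P f h \<le> ell_Pn P f g + ell_Pn P g h"
proof -
  have ell_L2: "ell_Pn P f g = sqrt (1 / real (card P)) * L2_set (\<lambda>x. f x - g x) P" for f g
    unfolding ell_Pn_def L2_set_def real_sqrt_mult[symmetric] by simp
  have "L2_set (\<lambda>x. f x - h x) P \<le> L2_set (\<lambda>x. f x - g x) P + L2_set (\<lambda>x. g x - h x) P"
    using L2_set_triangle_ineq[of "\<lambda>x. f x - g x" "\<lambda>x. g x - h x" P] by simp
  then show ?thesis
    unfolding ell_L2 by (simp add: mult_left_mono flip: distrib_left)
qed

lemma ell_Pn_cong:
  "(\<And>x. x \<in> P \<Longrightarrow> f x = f' x) \<Longrightarrow> (\<And>x. x \<in> P \<Longrightarrow> g x = g' x) \<Longrightarrow> ell_Pn P f g = ell_Pn P f' g'"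
  unfolding ell_Pn_def by (simp cong: sum.cong)

lemma ell_Pn_lowered:
  assumes "finite P" and "0 \<le> h"
  shows "ell_Pn P (\<lambda>x. u x - (if x \<in> S then h else 0)) (\<lambda>x. u x - (if x \<in> T then h else 0))
           = h * sqrt (card (P \<inter> sym_diff S T) / card P)"
proof -
  have "(\<Sum>x\<in>P. ((u x - (if x \<in> S then h else 0)) - (u x - (if x \<in> T then h else 0)))^2)
      = (\<Sum>x\<in>P. if x \<in> sym_diff S T then h^2 else 0)"
    by (intro sum.cong) auto
  also have "\<dots> = (\<Sum>x\<in>P \<inter> sym_diff S T. h^2)"
    by (rule sum.inter_restrict[OF \<open>finite P\<close>, symmetric])
  finally have "ell_Pn P (\<lambda>x. u x - (if x \<in> S then h else 0)) (\<lambda>x. u x - (if x \<in> T then h else 0))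
      = sqrt (h^2 * (card (P \<inter> sym_diff S T) / card P))"
    by (simp add: ell_Pn_def field_simps)
  also have "\<dots> = h * sqrt (card (P \<inter> sym_diff S T) / card P)"
    using \<open>0 \<le> h\<close> by (simp only: real_sqrt_mult real_sqrt_abs abs_of_nonneg)
  finally show ?thesis .
qed

section \<open>Tangent envelopes of the paraboloid\<close>

lemma convex_on_Max:
  assumes "finite I" and "I \<noteq> {}" and "convex \<Omega>" and "\<And>i. i \<in> I \<Longrightarrow> convex_on \<Omega> (f i)"
  shows "convex_on \<Omega> (\<lambda>x. Max ((\<lambda>i. f i x) ` I))"
proof (rule convex_onI[OF _ \<open>convex \<Omega>\<close>])
  fix t :: real and x y assume t: "0 < t" "t < 1" and "x \<in> \<Omega>" "y \<in> \<Omega>"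
  have "f i ((1 - t) *\<^sub>R x + t *\<^sub>R y) \<le> (1 - t) * Max ((\<lambda>i. f i x) ` I) + t * Max ((\<lambda>i. f i y) ` I)"
    if "i \<in> I" for i
  proof -
    have "f i ((1 - t) *\<^sub>R x + t *\<^sub>R y) \<le> (1 - t) * f i x + t * f i y"
      using assms(4)[OF that] t \<open>x \<in> \<Omega>\<close> \<open>y \<in> \<Omega>\<close> by (intro convex_onD) auto
    also have "\<dots> \<le> (1 - t) * Max ((\<lambda>i. f i x) ` I) + t * Max ((\<lambda>i. f i y) ` I)"
      using t that \<open>finite I\<close> by (intro add_mono mult_left_mono) auto
    finally show ?thesis .
  qed
  then show "Max ((\<lambda>i. f i ((1 - t) *\<^sub>R x + t *\<^sub>R y)) ` I)
      \<le> (1 - t) * Max ((\<lambda>i. f i x) ` I) + t * Max ((\<lambda>i. f i y) ` I)"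
    using assms(1,2) by simp
qed

definition tangent_envelope :: "'a::real_inner set \<Rightarrow> real \<Rightarrow> 'a set \<Rightarrow> 'a \<Rightarrow> real" where
  "tangent_envelope P h S x = Max ((\<lambda>p. 2 * (p \<bullet> x) - (norm p)^2 - (if p \<in> S then h else 0)) ` P)"

lemma convex_on_tangent_envelope:
  assumes "finite P" and "P \<noteq> {}" and "convex \<Omega>"
  shows "convex_on \<Omega> (tangent_envelope P h S)"
  unfolding tangent_envelope_def
proof (intro convex_on_Max assms convex_onI)
  fix p t x y
  show "2 * (p \<bullet> ((1 - t) *\<^sub>R x + t *\<^sub>R y)) - (norm p)^2 - (if p \<in> S then h else 0)
      \<le> (1 - t) * (2 * (p \<bullet> x) - (norm p)^2 - (if p \<in> S then h else 0))
        + t * (2 * (p \<bullet> y) - (norm p)^2 - (if p \<in> S then h else 0))"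
    by (simp add: algebra_simps)
qed

lemma tangent_envelope_eq:
  assumes "finite P" and "q \<in> P" and "0 \<le> h" and separated: "\<And>p. p \<in> P \<Longrightarrow> p \<noteq> q \<Longrightarrow> h \<le> (dist p q)^2"
  shows "tangent_envelope P h S q = (norm q)^2 - (if q \<in> S then h else 0)"
  unfolding tangent_envelope_def
proof (rule Max_eqI)
  have tangent: "2 * (p \<bullet> q) - (norm p)^2 = (norm q)^2 - (dist p q)^2" for p
    by (simp add: dist_norm power2_norm_eq_inner inner_diff_left inner_diff_right inner_commute)
  show "y \<le> (norm q)^2 - (if q \<in> S then h else 0)"
    if y_mem: "y \<in> (\<lambda>p. 2 * (p \<bullet> q) - (norm p)^2 - (if p \<in> S then h else 0)) ` P" for y
  proof -
    obtain p where "p \<in> P" and "y = 2 * (p \<bullet> q) - (norm p)^2 - (if p \<in> S then h else 0)"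
      using y_mem by blast
    then show ?thesis
      using separated[of p] tangent[of p] \<open>0 \<le> h\<close> by (cases "p = q") (auto split: if_splits)
  qed
  show "(norm q)^2 - (if q \<in> S then h else 0) \<in> (\<lambda>p. 2 * (p \<bullet> q) - (norm p)^2 - (if p \<in> S then h else 0)) ` P"
    using \<open>q \<in> P\<close> tangent[of q] by force
qed (use \<open>finite P\<close> in simp)

lemma log_covering_number_convex_ball_ge:
  fixes P \<Omega> :: "(real^'d) set"
  assumes "finite P" and "P \<noteq> {}" and "convex \<Omega>" and "0 < h" and "h \<le> t" and "\<epsilon> \<le> h / 8"
    and separated: "\<And>p q. p \<in> P \<Longrightarrow> q \<in> P \<Longrightarrow> p \<noteq> q \<Longrightarrow> h \<le> (dist p q)^2"
  shows "ereal (card P / 8)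
           \<le> log_covering_number \<epsilon> (emp_ball (ell_Pn P) (convex_class \<Omega>) (\<lambda>x. (norm x)^2) t) (ell_Pn P)"
proof (rule log_covering_number_ge_hamming[OF \<open>finite P\<close> \<open>0 < h\<close> \<open>\<epsilon> \<le> h / 8\<close> ell_Pn_commute ell_Pn_triangle])
  let ?g = "tangent_envelope P h"
  have envelope_on_P: "?g S x = (norm x)^2 - (if x \<in> S then h else 0)" if "x \<in> P" for S x
    using assms that by (intro tangent_envelope_eq) auto
  show hamming: "ell_Pn P (?g S) (?g T) = h * sqrt (card (sym_diff S T) / card P)"
    if "S \<subseteq> P" and "T \<subseteq> P" for S T
  proof -
    have "ell_Pn P (?g S) (?g T) = ell_Pn P (\<lambda>x. (norm x)^2 - (if x \<in> S then h else 0))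
        (\<lambda>x. (norm x)^2 - (if x \<in> T then h else 0))"
      by (intro ell_Pn_cong envelope_on_P)
    also have "\<dots> = h * sqrt (card (P \<inter> sym_diff S T) / card P)"
      using assms by (intro ell_Pn_lowered) auto
    also have "P \<inter> sym_diff S T = sym_diff S T" using that by auto
    finally show ?thesis .
  qed
  show "?g ` Pow P \<subseteq> emp_ball (ell_Pn P) (convex_class \<Omega>) (\<lambda>x. (norm x)^2) t"
  proof clarify
    fix S assume "S \<subseteq> P"
    have "ell_Pn P (\<lambda>x. (norm x)^2) (?g S) = ell_Pn P (?g {}) (?g S)"
      by (intro ell_Pn_cong) (simp_all add: envelope_on_P)
    also have "\<dots> = h * sqrt (card S / card P)"
      using hamming[of "{}" S] \<open>S \<subseteq> P\<close> by simp
    also have "\<dots> \<le> h * 1"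
    proof (intro mult_left_mono)
      have "card S \<le> card P" using \<open>finite P\<close> \<open>S \<subseteq> P\<close> by (rule card_mono)
      then show "sqrt (card S / card P) \<le> 1" by (auto simp: divide_le_eq_1)
    qed (use \<open>0 < h\<close> in simp)
    finally show "?g S \<in> emp_ball (ell_Pn P) (convex_class \<Omega>) (\<lambda>x. (norm x)^2) t"
      using convex_on_tangent_envelope[OF \<open>finite P\<close> \<open>P \<noteq> {}\<close> \<open>convex \<Omega>\<close>] \<open>h \<le> t\<close>
      by (simp add: emp_ball_def convex_class_def)
  qed
qed

lemma log_covering_number_scaled_lattice_ge:
  fixes P \<Omega> :: "(real^'d) set" and \<delta> a t \<epsilon> :: real
  assumes "finite P" and "P \<subseteq> scaled_lattice \<delta>" and "convex \<Omega>" and "0 < \<delta>"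
    and "0 < a" and "a \<le> card P * \<delta> ^ CARD('d)"
    and "card P powr (- 2 / CARD('d)) \<le> t"
    and "\<epsilon> \<le> min 1 (a powr (2 / CARD('d))) / 8 * card P powr (- 2 / CARD('d))"
  shows "ereal (card P / 8) \<le> log_covering_number \<epsilon> (emp_ball (ell_Pn P) (convex_class \<Omega>) (\<lambda>x. (norm x)^2) t) (ell_Pn P)"
proof -
  let ?r = "card P powr (- 2 / CARD('d))"
  have "0 < card P * \<delta> ^ CARD('d)" using assms(5,6) by linarith
  then have "0 < card P" using \<open>0 < \<delta>\<close> by (simp add: zero_less_mult_iff)
  then have "P \<noteq> {}" by auto
  have spacing: "a powr (2 / CARD('d)) * ?r \<le> \<delta>^2"
    using assms by (intro powr_mult_powr_le_of_le_mult_power) auto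
  define h where "h = min t (\<delta>^2)"
  have "0 < ?r" using \<open>0 < card P\<close> by simp
  then have "0 < t" using assms(7) by linarith
  then have "0 < h" using \<open>0 < \<delta>\<close> by (simp add: h_def)
  have "min 1 (a powr (2 / CARD('d))) * ?r \<le> 1 * ?r"
    using \<open>0 < ?r\<close> by (intro mult_right_mono) simp_all
  moreover have "min 1 (a powr (2 / CARD('d))) * ?r \<le> a powr (2 / CARD('d)) * ?r"
    using \<open>0 < ?r\<close> by (intro mult_right_mono) simp_all
  ultimately have "min 1 (a powr (2 / CARD('d))) * ?r \<le> h"
    using spacing assms(7) unfolding h_def min.bounded_iff by linarith
  then have "\<epsilon> \<le> h / 8"
    using assms(8) by linarith
  have separated: "h \<le> (dist p q)^2" if "p \<in> P" "q \<in> P" "p \<noteq> q" for p q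
  proof -
    have "\<delta> \<le> dist p q"
      using that assms(2,4) by (intro scaled_lattice_dist_ge) auto
    then show ?thesis
      using \<open>0 < \<delta>\<close> by (simp add: h_def min.coboundedI2 power_mono)
  qed
  have "h \<le> t" by (simp add: h_def)
  show ?thesis
    by (rule log_covering_number_convex_ball_ge[OF \<open>finite P\<close> \<open>P \<noteq> {}\<close> \<open>convex \<Omega>\<close> \<open>0 < h\<close>
          \<open>h \<le> t\<close> \<open>\<epsilon> \<le> h / 8\<close> separated])
qed

theorem lemma7p3:
  fixes \<kappa> :: real
  assumes "\<kappa> > 0"
  shows "\<exists>c1>0. \<exists>c2>0. \<exists>\<delta>0>0. \<forall>(\<Omega>::(real^'d) set) \<delta>.
     compact \<Omega> \<and> convex \<Omega> \<and> interior \<Omega> \<noteq> {} \<and> \<Omega> \<subseteq> cball 0 1 \<and>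
     measure lborel \<Omega> \<ge> \<kappa> \<and> 0 < \<delta> \<and> \<delta> \<le> \<delta>0 \<longrightarrow>
     (let P = scaled_lattice \<delta> \<inter> \<Omega>; n = real (card P); f0 = (\<lambda>x. (norm x)^2) in
      \<forall>t. t \<ge> c2 * n powr (-2 / real CARD('d)) \<longrightarrow>
        log_covering_number (c1 * n powr (-2 / real CARD('d)))
           (emp_ball (ell_Pn P) (convex_class \<Omega>) f0 t) (ell_Pn P) \<ge> ereal (n / 8))"
proof -
  obtain \<delta>0 where "0 < \<delta>0" and fills: "\<And>(\<Omega> :: (real^'d) set) \<delta>. convex \<Omega> \<Longrightarrow> \<Omega> \<subseteq> cball 0 1 \<Longrightarrow>
      \<kappa> \<le> measure lebesgue \<Omega> \<Longrightarrow> 0 < \<delta> \<Longrightarrow> \<delta> \<le> \<delta>0 \<Longrightarrow>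
      \<kappa> / 2 \<le> real (card (scaled_lattice \<delta> \<inter> \<Omega>)) * \<delta> ^ CARD('d)"
    using scaled_lattice_fills_convex_body[OF \<open>\<kappa> > 0\<close>] by blast
  define c1 where "c1 = min 1 ((\<kappa> / 2) powr (2 / real CARD('d))) / 8"
  have "0 < c1" using assms by (simp add: c1_def)
  have "ereal (card (scaled_lattice \<delta> \<inter> \<Omega>) / 8) \<le> log_covering_number
      (c1 * card (scaled_lattice \<delta> \<inter> \<Omega>) powr (- 2 / real CARD('d)))
      (emp_ball (ell_Pn (scaled_lattice \<delta> \<inter> \<Omega>)) (convex_class \<Omega>) (\<lambda>x. (norm x)^2) t)
      (ell_Pn (scaled_lattice \<delta> \<inter> \<Omega>))"
    if "compact \<Omega>" "convex \<Omega>" "\<Omega> \<subseteq> cball 0 1" "\<kappa> \<le> measure lborel \<Omega>" "0 < \<delta>" "\<delta> \<le> \<delta>0"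
      and "card (scaled_lattice \<delta> \<inter> \<Omega>) powr (- 2 / real CARD('d)) \<le> t"
    for \<Omega> :: "(real^'d) set" and \<delta> t
  proof (rule log_covering_number_scaled_lattice_ge)
    show "finite (scaled_lattice \<delta> \<inter> \<Omega>)"
      using that by (intro finite_scaled_lattice_Int compact_imp_bounded)
    have "\<Omega> \<in> sets borel" using compact_imp_closed[OF \<open>compact \<Omega>\<close>] by simp
    then show "\<kappa> / 2 \<le> real (card (scaled_lattice \<delta> \<inter> \<Omega>)) * \<delta> ^ CARD('d)"
      using that by (intro fills) auto
    show "c1 * card (scaled_lattice \<delta> \<inter> \<Omega>) powr (- 2 / real CARD('d))
        \<le> min 1 ((\<kappa> / 2) powr (2 / real CARD('d))) / 8 * card (scaled_lattice \<delta> \<inter> \<Omega>) powr (- 2 / real CARD('d))"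
      by (simp add: c1_def)
  qed (use that assms in auto)
  then show ?thesis
    using \<open>0 < c1\<close> \<open>0 < \<delta>0\<close> unfolding Let_def
    by (intro exI[of _ c1] exI[of _ "1::real"] exI[of _ \<delta>0] conjI allI impI) auto
qed

end
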